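(* Let $k$ be a positive integer. If a graph $G$ is $k$-maximal, then $\kappa'(G)=\overline{\kappa'}(G)=k$.
   Context: Graphs are finite, loopless, possibly with multiple edges. $\kappa'(G)$ is the edge connectivity and $\overline{\kappa'}(G)=\max\{\kappa'(H): H \text{ a subgraph of } G\}$. A graph $G$ is $k$-maximal if $\overline{\kappa'}(G)\le k$ but for any new edge $e\notin E(G)$ joining two vertices of $G$ (possibly parallel to an existing edge), $\overline{\kappa'}(G+e)\ge k+1$. *)

theory Defs
  imports Main
begin

text \<open>A finite loopless multigraph: vertex set V and a symmetric edge-multiplicity
  function m (m u v = number of parallel edges between u and v).\<close>

definition mgraph :: "'a set \<Rightarrow> ('a \<Rightarrow> 'a \<Rightarrow> nat) \<Rightarrow> bool" where
  "mgraph V m \<longleftrightarrow> finite V \<and> (\<forall>u v. m u v = m v u) \<and> (\<forall>v. m v v = 0)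
     \<and> (\<forall>u v. 0 < m u v \<longrightarrow> u \<in> V \<and> v \<in> V)"

definition subgraph :: "'a set \<Rightarrow> ('a \<Rightarrow> 'a \<Rightarrow> nat) \<Rightarrow> 'a set \<Rightarrow> ('a \<Rightarrow> 'a \<Rightarrow> nat) \<Rightarrow> bool" where
  "subgraph W h V m \<longleftrightarrow> mgraph W h \<and> W \<subseteq> V \<and> (\<forall>u v. h u v \<le> m u v)"

definition cut_size :: "'a set \<Rightarrow> ('a \<Rightarrow> 'a \<Rightarrow> nat) \<Rightarrow> 'a set \<Rightarrow> nat" where
  "cut_size V m S = (\<Sum>u\<in>S. \<Sum>v\<in>V - S. m u v)"

definition edge_conn :: "'a set \<Rightarrow> ('a \<Rightarrow> 'a \<Rightarrow> nat) \<Rightarrow> nat" where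
  "edge_conn V m = (if card V \<le> 1 then 0
     else Min {cut_size V m S | S. S \<subseteq> V \<and> S \<noteq> {} \<and> S \<noteq> V})"

definition max_sub_edge_conn :: "'a set \<Rightarrow> ('a \<Rightarrow> 'a \<Rightarrow> nat) \<Rightarrow> nat" where
  "max_sub_edge_conn V m = Max {edge_conn W h | W h. subgraph W h V m}"

definition add_edge :: "('a \<Rightarrow> 'a \<Rightarrow> nat) \<Rightarrow> 'a \<Rightarrow> 'a \<Rightarrow> ('a \<Rightarrow> 'a \<Rightarrow> nat)" where
  "add_edge m u v = (\<lambda>x y. if (x = u \<and> y = v) \<or> (x = v \<and> y = u) then Suc (m x y) else m x y)"

definition k_maximal :: "nat \<Rightarrow> 'a set \<Rightarrow> ('a \<Rightarrow> 'a \<Rightarrow> nat) \<Rightarrow> bool" where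
  "k_maximal k V m \<longleftrightarrow> max_sub_edge_conn V m \<le> k \<and>
     (\<forall>u\<in>V. \<forall>v\<in>V. u \<noteq> v \<longrightarrow> max_sub_edge_conn V (add_edge m u v) \<ge> k + 1)"

end

theory Submission
  imports Defs
begin

text \<open>If \<open>\<kappa>'(G) < k\<close>, add an edge \<open>uv\<close> across a minimum cut \<open>[S, V - S]\<close>. By maximality
  \<open>G + uv\<close> has a subgraph \<open>H\<close> with \<open>\<kappa>'(H) > k\<close>. \<open>H\<close> must use the new edge, since otherwise
  it is a subgraph of \<open>G\<close>; so \<open>u, v \<in> V(H)\<close> and \<open>S \<inter> V(H)\<close> is a proper cut of \<open>H\<close> with at
  most \<open>\<kappa>'(G) + 1 \<le> k\<close> edges, a contradiction.\<close>

lemma finite_cut_sizes: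
  assumes "finite W"
  shows "finite {cut_size W h S | S. S \<subseteq> W \<and> S \<noteq> {} \<and> S \<noteq> W}"
proof -
  have "{cut_size W h S | S. S \<subseteq> W \<and> S \<noteq> {} \<and> S \<noteq> W} \<subseteq> cut_size W h ` Pow W" by auto
  with assms show ?thesis by (meson finite_Pow_iff finite_imageI finite_subset)
qed

lemma card_ge_2_if_proper_subset:
  assumes "finite W" "S \<subseteq> W" "S \<noteq> {}" "S \<noteq> W"
  shows "2 \<le> card W"
proof -
  obtain x y where "x \<in> S" "y \<in> W - S" using assms by blast
  hence "{x, y} \<subseteq> W" "x \<noteq> y" using assms(2) by auto
  moreover from \<open>x \<noteq> y\<close> have "card {x, y} = 2" by simp
  ultimately show ?thesis using card_mono[OF assms(1)] by metis
qed

lemma edge_conn_le_cut_size: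
  assumes "finite W" "S \<subseteq> W" "S \<noteq> {}" "S \<noteq> W"
  shows "edge_conn W h \<le> cut_size W h S"
  using card_ge_2_if_proper_subset[OF assms] assms
  by (auto simp: edge_conn_def intro!: Min_le finite_cut_sizes)

lemma edge_conn_attained:
  assumes "finite W" "2 \<le> card W"
  obtains S where "S \<subseteq> W" "S \<noteq> {}" "S \<noteq> W" "edge_conn W h = cut_size W h S"
proof -
  obtain x where x: "x \<in> W" using assms(2) by fastforce
  moreover have "{x} \<noteq> W" using assms(2) by auto
  ultimately have "{cut_size W h S | S. S \<subseteq> W \<and> S \<noteq> {} \<and> S \<noteq> W} \<noteq> {}" by blast
  from Min_in[OF finite_cut_sizes[OF assms(1)] this] assms(2) that show ?thesis
    by (auto simp: edge_conn_def)
qed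

lemma edge_conn_subgraph_le_edge_count:
  assumes "mgraph V m" "subgraph W h V m"
  shows "edge_conn W h \<le> (\<Sum>u\<in>V. \<Sum>v\<in>V. m u v)"
proof (cases "card W \<le> 1")
  case True
  thus ?thesis by (simp add: edge_conn_def)
next
  case False
  have fW: "finite W" and WV: "W \<subseteq> V" and hm: "\<And>u v. h u v \<le> m u v"
    using assms(2) unfolding subgraph_def mgraph_def by auto
  have fV: "finite V" using assms(1) unfolding mgraph_def by auto
  obtain x where x: "x \<in> W" using False by fastforce
  have "edge_conn W h \<le> cut_size W h {x}"
    by (rule edge_conn_le_cut_size) (use fW x False in auto)
  also have "\<dots> = (\<Sum>v\<in>W - {x}. h x v)" by (simp add: cut_size_def)
  also have "\<dots> \<le> (\<Sum>v\<in>W - {x}. m x v)" by (rule sum_mono) (rule hm)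
  also have "\<dots> \<le> (\<Sum>v\<in>V. m x v)" by (rule sum_mono2[OF fV]) (use WV in auto)
  also have "\<dots> \<le> (\<Sum>u\<in>V. \<Sum>v\<in>V. m u v)"
    by (rule member_le_sum) (use x WV fV in auto)
  finally show ?thesis .
qed

lemma finite_sub_edge_conns:
  assumes "mgraph V m"
  shows "finite {edge_conn W h | W h. subgraph W h V m}"
  by (rule finite_subset[of _ "{..\<Sum>u\<in>V. \<Sum>v\<in>V. m u v}"])
     (use edge_conn_subgraph_le_edge_count[OF assms] in auto)

lemma edge_conn_le_max_sub_edge_conn:
  assumes "mgraph V m" "subgraph W h V m"
  shows "edge_conn W h \<le> max_sub_edge_conn V m"
  unfolding max_sub_edge_conn_def
  by (rule Max_ge[OF finite_sub_edge_conns[OF assms(1)]]) (use assms(2) in blast)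

lemma max_sub_edge_conn_attained:
  assumes "mgraph V m"
  obtains W h where "subgraph W h V m" "edge_conn W h = max_sub_edge_conn V m"
proof -
  have "subgraph {} (\<lambda>_ _. 0) V m" by (simp add: subgraph_def mgraph_def)
  hence "{edge_conn W h | W h. subgraph W h V m} \<noteq> {}" by blast
  from Max_in[OF finite_sub_edge_conns[OF assms] this] that show ?thesis
    unfolding max_sub_edge_conn_def by auto
qed

lemma mgraph_add_edge:
  assumes "mgraph V m" "u \<in> V" "v \<in> V" "u \<noteq> v"
  shows "mgraph V (add_edge m u v)"
  using assms unfolding mgraph_def add_edge_def by auto

text \<open>Kept as a separate rule: unfolding \<open>add_edge\<close> under this hypothesis makes the simplifier loop.\<close>

lemma add_edge_eq_self:
  assumes "\<not> ((x = u \<and> y = v) \<or> (x = v \<and> y = u))"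
  shows "add_edge m u v x y = m x y"
  unfolding add_edge_def if_not_P[OF assms] ..

lemma add_edge_eq_Suc: "add_edge m u v u v = Suc (m u v)"
  by (simp add: add_edge_def)

lemma cut_size_add_edge_across:
  assumes "finite V" "S \<subseteq> V" "u \<in> S" "v \<in> V - S"
  shows "cut_size V (add_edge m u v) S = Suc (cut_size V m S)"
proof -
  let ?new = "\<lambda>x y. if x = u \<and> y = v then 1 else 0 :: nat"
  have "add_edge m u v x y = m x y + ?new x y" if "x \<in> S" "y \<in> V - S" for x y
  proof (cases "x = u \<and> y = v")
    case True
    thus ?thesis by (simp add: add_edge_eq_Suc)
  next
    case False
    moreover have "\<not> (x = v \<and> y = u)" using that assms(4) by blast
    ultimately show ?thesis by (simp add: add_edge_eq_self)
  qed
  hence "cut_size V (add_edge m u v) S = (\<Sum>x\<in>S. \<Sum>y\<in>V - S. m x y + ?new x y)"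
    unfolding cut_size_def by (intro sum.cong refl) simp
  also have "\<dots> = cut_size V m S + (\<Sum>x\<in>S. \<Sum>y\<in>V - S. ?new x y)"
    by (simp only: cut_size_def sum.distrib)
  also have "(\<Sum>x\<in>S. \<Sum>y\<in>V - S. ?new x y) = (\<Sum>x\<in>S. if x = u then 1 else 0)"
  proof (rule sum.cong[OF refl])
    fix x
    have "(\<Sum>y\<in>V - S. if y = v then 1 else 0) = (1::nat)"
      using assms(1,4) by (simp add: sum.delta')
    thus "(\<Sum>y\<in>V - S. ?new x y) = (if x = u then 1 else 0)" by simp
  qed
  also have "\<dots> = 1" using assms(3) finite_subset[OF assms(2,1)] by simp
  finally show ?thesis by simp
qed

lemma cut_size_restrict_to_subgraph:
  assumes "subgraph W h V m" "finite V" "S \<subseteq> V"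
  shows "cut_size W h (S \<inter> W) \<le> cut_size V m S"
proof -
  have WV: "W \<subseteq> V" and hm: "\<And>x y. h x y \<le> m x y"
    using assms(1) unfolding subgraph_def by auto
  have "W - S \<inter> W = W - S" by blast
  hence "cut_size W h (S \<inter> W) = (\<Sum>x\<in>S \<inter> W. \<Sum>y\<in>W - S. h x y)"
    by (simp add: cut_size_def)
  also have "\<dots> \<le> (\<Sum>x\<in>S \<inter> W. \<Sum>y\<in>V - S. h x y)"
    by (intro sum_mono sum_mono2) (use assms(2) WV in auto)
  also have "\<dots> \<le> (\<Sum>x\<in>S. \<Sum>y\<in>V - S. h x y)"
    by (rule sum_mono2) (use assms(2,3) in \<open>auto intro: finite_subset\<close>)
  also have "\<dots> \<le> cut_size V m S"
    unfolding cut_size_def by (intro sum_mono hm)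
  finally show ?thesis .
qed

lemma subgraph_of_add_edge_avoiding:
  assumes "subgraph W h V (add_edge m u v)" "h u v = 0"
  shows "subgraph W h V m"
proof -
  have "h x y \<le> m x y" for x y
  proof (cases "(x = u \<and> y = v) \<or> (x = v \<and> y = u)")
    case True
    moreover have "h v u = 0"
      using assms unfolding subgraph_def mgraph_def by metis
    ultimately show ?thesis using assms(2) by auto
  next
    case False
    hence "add_edge m u v x y = m x y" by (rule add_edge_eq_self)
    thus ?thesis using assms(1) unfolding subgraph_def by metis
  qed
  thus ?thesis using assms(1) by (simp add: subgraph_def)
qed

lemma k_maximal_imp_edge_conn_ge:
  assumes "mgraph V m" "2 \<le> card V" "k_maximal k V m"
  shows "k \<le> edge_conn V m"
proof (rule ccontr)
  assume "\<not> k \<le> edge_conn V m"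
  have fV: "finite V" using assms(1) by (simp add: mgraph_def)
  obtain S where S: "S \<subseteq> V" "S \<noteq> {}" "S \<noteq> V" and min_cut: "edge_conn V m = cut_size V m S"
    using edge_conn_attained[OF fV assms(2)] by metis
  obtain u v where u: "u \<in> S" and v: "v \<in> V - S" using S by blast
  hence uv: "u \<in> V" "v \<in> V" "u \<noteq> v" using S(1) by auto
  define m' where "m' = add_edge m u v"
  have "mgraph V m'" unfolding m'_def using uv by (rule mgraph_add_edge[OF assms(1)])
  then obtain W h where H: "subgraph W h V m'" and "edge_conn W h = max_sub_edge_conn V m'"
    by (rule max_sub_edge_conn_attained)
  moreover have "k + 1 \<le> max_sub_edge_conn V m'"
    using assms(3) uv unfolding k_maximal_def m'_def by simp
  ultimately have H_conn: "k + 1 \<le> edge_conn W h" by simp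
  show False
  proof (cases "h u v = 0")
    case True
    with H have "subgraph W h V m" unfolding m'_def by (rule subgraph_of_add_edge_avoiding)
    hence "edge_conn W h \<le> max_sub_edge_conn V m"
      by (rule edge_conn_le_max_sub_edge_conn[OF assms(1)])
    with H_conn assms(3) show False by (simp add: k_maximal_def)
  next
    case False
    have "finite W" and "u \<in> W" "v \<in> W"
      using H False unfolding subgraph_def mgraph_def by auto
    hence "edge_conn W h \<le> cut_size W h (S \<inter> W)"
      using u v by (intro edge_conn_le_cut_size) auto
    also have "\<dots> \<le> cut_size V m' S" by (rule cut_size_restrict_to_subgraph[OF H fV S(1)])
    also have "\<dots> = Suc (edge_conn V m)"
      unfolding m'_def min_cut using fV S(1) u v by (rule cut_size_add_edge_across)
    finally show False using H_conn \<open>\<not> k \<le> edge_conn V m\<close> by simp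
  qed
qed

theorem lemma3p3:
  fixes k :: nat and V :: "'a set" and m :: "'a \<Rightarrow> 'a \<Rightarrow> nat"
  assumes "0 < k"
    and "mgraph V m"
    and "2 \<le> card V"
    and "k_maximal k V m"
  shows "edge_conn V m = k \<and> max_sub_edge_conn V m = k"
proof -
  have "subgraph V m V m" using assms(2) by (simp add: subgraph_def)
  hence "edge_conn V m \<le> max_sub_edge_conn V m"
    using assms(2) by (rule edge_conn_le_max_sub_edge_conn[rotated])
  moreover have "max_sub_edge_conn V m \<le> k" using assms(4) by (simp add: k_maximal_def)
  moreover have "k \<le> edge_conn V m" using assms(2-4) by (rule k_maximal_imp_edge_conn_ge)
  ultimately show ?thesis by simp
qed

end
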